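(* Let $L>0$, let $a$ satisfy (H_a), $g\in L^2(0,L)$, and let $\phi$ satisfy (H_φ). Then every weak solution $u$ of problem (P) satisfies $$\int_0^L a\Big(\frac{du}{dx}\Big)^2dx=\int_0^L g\frac{du}{dx}\,dx,\qquad \Big\|\frac{du}{dx}\Big\|_{L^2(0,L)}\le\frac1\alpha\|g\|_{L^2(0,L)},\qquad \|u\|_{L^\infty(0,L)}\le\frac{\sqrt L}{\alpha}\|g\|_{L^2(0,L)}.$$
   Context: (H_a): $a\in L^\infty(0,L)$ and there are constants $0<\alpha<\beta$ with $\alpha\le a(x)\le\beta$ for a.e. $x\in(0,L)$. (H_φ): $\phi:\mathbb{R}\to\mathbb{R}\cup\{+\infty\}$ is continuous when $\mathbb{R}\cup\{+\infty\}$ carries its usual topology, and $\phi(s)<+\infty$ for every $s\neq0$. A weak solution of problem (P) with data $(a,g,\phi)$ is a function $u$ with $u\in H^1_0(0,L)$, $\phi(u)\in L^2(0,L)$, and $-\frac{d}{dx}(a\frac{du}{dx})=-\frac{d\phi(u)}{dx}-\frac{dg}{dx}$ in $\mathcal D'(0,L)$. *)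

theory Defs
  imports "HOL-Analysis.Analysis"
begin

abbreviation Iv :: "real \<Rightarrow> real measure" where
  "Iv L \<equiv> lebesgue_on {0<..<L}"

definition L2 :: "real \<Rightarrow> (real \<Rightarrow> real) \<Rightarrow> bool" where
  "L2 L f \<longleftrightarrow> f \<in> borel_measurable (Iv L) \<and> integrable (Iv L) (\<lambda>x. (f x)\<^sup>2)"

definition L2norm :: "real \<Rightarrow> (real \<Rightarrow> real) \<Rightarrow> real" where
  "L2norm L f = sqrt (integral\<^sup>L (Iv L) (\<lambda>x. (f x)\<^sup>2))"

definition test_fun :: "real \<Rightarrow> (real \<Rightarrow> real) \<Rightarrow> bool" where
  "test_fun L \<psi> \<longleftrightarrow> (\<forall>n x. ((deriv ^^ n) \<psi>) differentiable (at x)) \<and>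
     (\<exists>c d. 0 < c \<and> d < L \<and> (\<forall>x. x \<notin> {c..d} \<longrightarrow> \<psi> x = 0))"

definition weak_deriv :: "real \<Rightarrow> (real \<Rightarrow> real) \<Rightarrow> (real \<Rightarrow> real) \<Rightarrow> bool" where
  "weak_deriv L u v \<longleftrightarrow> (\<forall>\<psi>. test_fun L \<psi> \<longrightarrow>
     integral\<^sup>L (Iv L) (\<lambda>x. u x * deriv \<psi> x) = - integral\<^sup>L (Iv L) (\<lambda>x. v x * \<psi> x))"

text \<open>H^1_0(0,L): closure of C_c^\<infinity>(0,L) in the H^1 norm.\<close>
definition H10 :: "real \<Rightarrow> (real \<Rightarrow> real) \<Rightarrow> bool" where
  "H10 L u \<longleftrightarrow> (\<exists>v. L2 L u \<and> L2 L v \<and> weak_deriv L u v \<and>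
     (\<exists>\<psi>s. (\<forall>n. test_fun L (\<psi>s n)) \<and>
        (\<lambda>n. integral\<^sup>L (Iv L) (\<lambda>x. (\<psi>s n x - u x)\<^sup>2)) \<longlonglongrightarrow> 0 \<and>
        (\<lambda>n. integral\<^sup>L (Iv L) (\<lambda>x. (deriv (\<psi>s n) x - v x)\<^sup>2)) \<longlonglongrightarrow> 0))"

text \<open>Weak solution of (P): u in H^1_0, phi(u) in L^2 (in particular finite a.e.) and
  -(a u')' = -(phi(u))' - g' in D'(0,L), i.e. for every test function psi
  int a u' psi' = int phi(u) psi' + int g psi'.\<close>
definition weak_solution :: "real \<Rightarrow> (real \<Rightarrow> real) \<Rightarrow> (real \<Rightarrow> real) \<Rightarrow> (real \<Rightarrow> ereal)
     \<Rightarrow> (real \<Rightarrow> real) \<Rightarrow> bool" where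
  "weak_solution L a g \<phi> u \<longleftrightarrow> H10 L u \<and>
     (AE x in Iv L. \<phi> (u x) \<noteq> \<infinity>) \<and> L2 L (\<lambda>x. real_of_ereal (\<phi> (u x))) \<and>
     (\<forall>v \<psi>. L2 L v \<and> weak_deriv L u v \<and> test_fun L \<psi> \<longrightarrow>
        integral\<^sup>L (Iv L) (\<lambda>x. a x * v x * deriv \<psi> x) =
          integral\<^sup>L (Iv L) (\<lambda>x. real_of_ereal (\<phi> (u x)) * deriv \<psi> x)
          + integral\<^sup>L (Iv L) (\<lambda>x. g x * deriv \<psi> x))"

end

theory Submission
  imports Defs "HOL-Computational_Algebra.Polynomial"
begin

text \<open>
  Test the equation with test functions \<open>\<psi>\<^sub>n\<close> converging to \<open>u\<close> in \<open>H\<^sup>1\<close> and pass to the limit: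
  \<open>\<integral> a u' u' = \<integral> \<phi>(u) u' + \<integral> g u'\<close>. The \<open>\<phi>\<close>-term vanishes because it is the integral of the
  derivative of \<open>\<Phi>(u)\<close>, \<open>\<Phi>\<close> a primitive of \<open>\<phi>\<close>: for a test function \<open>\<psi>\<close> one has
  \<open>\<integral> h(\<psi>) \<psi>' = H(\<psi>(L)) - H(\<psi>(0)) = 0\<close>, and this survives the limit because \<open>\<psi>\<^sub>n\<close> converges
  uniformly to the continuous representative \<open>x \<mapsto> \<integral>\<^sub>0\<^sup>x u'\<close> of \<open>u\<close>; the possibly infinite \<open>\<phi>\<close>
  is reached by truncation and dominated convergence. The energy identity then gives
  \<open>\<alpha> \<parallel>u'\<parallel>\<^sup>2 \<le> \<parallel>g\<parallel> \<parallel>u'\<parallel>\<close>, and \<open>|u(x)| = |\<integral>\<^sub>0\<^sup>x u'| \<le> \<surd>L \<parallel>u'\<parallel>\<close>.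
\<close>

section \<open>Smooth functions and a smooth cutoff\<close>

text \<open>\<open>differentiable_upto n f\<close> says that \<open>f\<close> is \<open>n + 1\<close> times differentiable on \<open>\<real>\<close>.\<close>

definition differentiable_upto :: "nat \<Rightarrow> (real \<Rightarrow> real) \<Rightarrow> bool" where
  "differentiable_upto n f \<longleftrightarrow> (\<forall>k\<le>n. \<forall>x. (deriv ^^ k) f differentiable (at x))"

lemma differentiable_upto_0: "differentiable_upto 0 f \<longleftrightarrow> (\<forall>x. f differentiable (at x))"
  unfolding differentiable_upto_def by auto

lemma differentiable_upto_Suc:
  "differentiable_upto (Suc n) f \<longleftrightarrow> (\<forall>x. f differentiable (at x)) \<and> differentiable_upto n (deriv f)"
proof -
  have shift: "(deriv ^^ Suc k) f = (deriv ^^ k) (deriv f)" for k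
    by (simp add: funpow_Suc_right del: funpow.simps)
  have "(\<forall>k\<le>Suc n. P k) \<longleftrightarrow> P 0 \<and> (\<forall>k\<le>n. P (Suc k))" for P :: "nat \<Rightarrow> bool"
    by (metis Suc_le_mono le0 not0_implies_Suc)
  then show ?thesis
    unfolding differentiable_upto_def by (simp only: shift funpow_0)
qed

lemma differentiable_upto_imp_differentiable:
  "differentiable_upto n f \<Longrightarrow> f differentiable (at x)"
  unfolding differentiable_upto_def by (metis funpow_0 le0)

lemma differentiable_upto_imp_continuous:
  "differentiable_upto n f \<Longrightarrow> continuous_on UNIV f"
  by (meson differentiable_upto_imp_differentiable differentiable_imp_continuous_on
      differentiable_on_def)

lemma differentiable_upto_mono: "differentiable_upto (Suc n) f \<Longrightarrow> differentiable_upto n f"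
  unfolding differentiable_upto_def by auto

lemma differentiable_upto_const: "differentiable_upto n (\<lambda>x. c)"
proof (induction n arbitrary: c)
  case (Suc n)
  have "deriv (\<lambda>x. c) = (\<lambda>x. 0)" by (rule ext) simp
  with Suc show ?case unfolding differentiable_upto_Suc by simp
qed (simp add: differentiable_upto_0)

lemma differentiable_upto_add:
  "differentiable_upto n f \<Longrightarrow> differentiable_upto n g \<Longrightarrow> differentiable_upto n (\<lambda>x. f x + g x)"
proof (induction n arbitrary: f g)
  case (Suc n)
  then have d: "\<And>x. f differentiable (at x)" "\<And>x. g differentiable (at x)"
    by (simp_all add: differentiable_upto_Suc)
  have "deriv (\<lambda>x. f x + g x) = (\<lambda>x. deriv f x + deriv g x)"
    using d by (intro ext deriv_add) (auto simp: field_differentiable_def real_differentiable_def)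
  with Suc d show ?case unfolding differentiable_upto_Suc by simp
qed (simp add: differentiable_upto_0)

lemma differentiable_upto_mult:
  "differentiable_upto n f \<Longrightarrow> differentiable_upto n g \<Longrightarrow> differentiable_upto n (\<lambda>x. f x * g x)"
proof (induction n arbitrary: f g)
  case (Suc n)
  then have d: "\<And>x. f differentiable (at x)" "\<And>x. g differentiable (at x)"
    by (simp_all add: differentiable_upto_Suc)
  have "deriv (\<lambda>x. f x * g x) = (\<lambda>x. deriv f x * g x + f x * deriv g x)"
    using d by (intro ext deriv_mult) (auto simp: field_differentiable_def real_differentiable_def)
  moreover have "differentiable_upto n (\<lambda>x. deriv f x * g x + f x * deriv g x)"
    using Suc.prems differentiable_upto_mono[OF Suc.prems(1)] differentiable_upto_mono[OF Suc.prems(2)]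
    by (intro differentiable_upto_add Suc.IH) (simp_all add: differentiable_upto_Suc)
  ultimately show ?case using d unfolding differentiable_upto_Suc by simp
qed (simp add: differentiable_upto_0)

lemma differentiable_upto_inverse:
  assumes nz: "\<And>x. g x \<noteq> 0"
  shows "differentiable_upto n g \<Longrightarrow> differentiable_upto n (\<lambda>x. inverse (g x))"
proof (induction n)
  case 0
  then show ?case
    unfolding differentiable_upto_0
    using DERIV_inverse_fun nz DERIV_deriv_iff_real_differentiable real_differentiable_def by blast
next
  case (Suc n)
  then have d: "\<And>x. (g has_real_derivative deriv g x) (at x)"
    by (simp add: differentiable_upto_Suc DERIV_deriv_iff_real_differentiable)
  let ?g' = "\<lambda>x. (-1) * (deriv g x * (inverse (g x) * inverse (g x)))"
  have D: "((\<lambda>x. inverse (g x)) has_real_derivative ?g' x) (at x)" for x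
    using DERIV_inverse_fun[OF d nz, of x] by (simp add: power2_eq_square)
  then have "deriv (\<lambda>x. inverse (g x)) = ?g'"
    by (intro ext DERIV_imp_deriv)
  moreover have "differentiable_upto n ?g'"
    using Suc differentiable_upto_mono[OF Suc.prems]
    by (intro differentiable_upto_mult differentiable_upto_const)
      (simp_all add: differentiable_upto_Suc)
  ultimately show ?case
    using D unfolding differentiable_upto_Suc real_differentiable_def by auto
qed

lemma differentiable_upto_affine:
  assumes "differentiable_upto n f"
  shows "differentiable_upto n (\<lambda>x. f (c * x + d))"
proof -
  have affine: "((\<lambda>x. c * x + d) has_real_derivative c) (at x)" for x
    by (auto intro!: derivative_eq_intros)
  show ?thesis
    using assms
  proof (induction n arbitrary: f)
    case 0
    with affine show ?case
      unfolding differentiable_upto_0 real_differentiable_def using DERIV_chain2 by blast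
  next
    case (Suc n)
    then have d: "\<And>x. (f has_real_derivative deriv f x) (at x)"
      by (simp add: differentiable_upto_Suc DERIV_deriv_iff_real_differentiable)
    have D: "((\<lambda>x. f (c * x + d)) has_real_derivative deriv f (c * x + d) * c) (at x)" for x
      using DERIV_chain2[OF d affine] .
    then have "deriv (\<lambda>x. f (c * x + d)) = (\<lambda>x. deriv f (c * x + d) * c)"
      by (intro ext DERIV_imp_deriv)
    moreover have "differentiable_upto n (\<lambda>x. deriv f (c * x + d) * c)"
      using Suc by (intro differentiable_upto_mult differentiable_upto_const)
        (simp_all add: differentiable_upto_Suc)
    ultimately show ?case
      using D unfolding differentiable_upto_Suc real_differentiable_def by metis
  qed
qed

definition exp_inv_poly :: "real poly \<Rightarrow> real \<Rightarrow> real" where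
  "exp_inv_poly p x = (if 0 < x then poly p (inverse x) * exp (- inverse x) else 0)"

text \<open>\<open>(p(1/x) e\<^sup>-\<^sup>1\<^sup>/\<^sup>x)' = q(1/x) e\<^sup>-\<^sup>1\<^sup>/\<^sup>x\<close> with \<open>q(t) = t\<^sup>2 (p(t) - p'(t))\<close>.\<close>

definition exp_inv_dpoly :: "real poly \<Rightarrow> real poly" where
  "exp_inv_dpoly p = [:0, 0, 1:] * (p - pderiv p)"

lemma poly_times_exp_neg_tendsto_0: "((\<lambda>t. poly q t * exp (- t)) \<longlongrightarrow> (0::real)) at_top"
proof -
  have "(\<lambda>t. poly q t * exp (- t)) = (\<lambda>t. \<Sum>i\<le>degree q. coeff q i * (t ^ i / exp t))"
    by (simp add: poly_altdef sum_distrib_right exp_minus divide_inverse mult.assoc)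
  then show ?thesis
    by (simp only:) (intro tendsto_null_sum tendsto_mult_right_zero tendsto_power_div_exp_0)
qed

lemma exp_inv_poly_has_real_derivative_0: "(exp_inv_poly p has_real_derivative 0) (at 0)"
proof -
  have "((\<lambda>y. exp_inv_poly p y / y) \<longlongrightarrow> 0) (at 0)"
  proof (rule filterlim_split_at)
    show "((\<lambda>y. exp_inv_poly p y / y) \<longlongrightarrow> 0) (at_left 0)"
      by (rule tendsto_eventually)
        (auto simp: exp_inv_poly_def eventually_at_left_field intro!: exI[of _ "-1"])
    have "((\<lambda>t. poly (pCons 0 p) t * exp (- t)) \<longlongrightarrow> 0) at_top"
      by (rule poly_times_exp_neg_tendsto_0)
    then have "((\<lambda>y. poly (pCons 0 p) (inverse y) * exp (- inverse y)) \<longlongrightarrow> 0) (at_right 0)"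
      using filterlim_compose[OF _ filterlim_inverse_at_top_right] by (simp add: o_def)
    moreover have "\<forall>\<^sub>F y in at_right 0.
        poly (pCons 0 p) (inverse y) * exp (- inverse y) = exp_inv_poly p y / y"
      by (auto simp: eventually_at_right_field exp_inv_poly_def divide_inverse intro!: exI[of _ 1])
    ultimately show "((\<lambda>y. exp_inv_poly p y / y) \<longlongrightarrow> 0) (at_right 0)"
      by (rule Lim_transform_eventually)
  qed
  then show ?thesis
    by (simp add: has_field_derivative_iff exp_inv_poly_def)
qed

lemma exp_inv_poly_has_real_derivative:
  "(exp_inv_poly p has_real_derivative exp_inv_poly (exp_inv_dpoly p) x) (at x)"
proof (cases x "0 :: real" rule: linorder_cases)
  case less
  have "((\<lambda>x. 0) has_real_derivative exp_inv_poly (exp_inv_dpoly p) x) (at x)"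
    using less by (simp add: exp_inv_poly_def)
  then show ?thesis
    by (rule has_field_derivative_transform_within_open[where S="{..<0}"])
      (use less in \<open>auto simp: exp_inv_poly_def\<close>)
next
  case equal
  then show ?thesis
    using exp_inv_poly_has_real_derivative_0 by (simp add: exp_inv_poly_def)
next
  case greater
  have i: "(inverse has_real_derivative - (inverse x * inverse x)) (at x)"
    using DERIV_inverse[of x] greater by (simp add: power2_eq_square)
  have "((\<lambda>x. poly p (inverse x) * exp (- inverse x))
      has_real_derivative exp_inv_poly (exp_inv_dpoly p) x) (at x)"
    using DERIV_mult[OF DERIV_chain2[OF poly_DERIV i] DERIV_chain2[OF DERIV_exp DERIV_minus[OF i]]]
      greater
    by (simp add: exp_inv_poly_def exp_inv_dpoly_def algebra_simps power2_eq_square)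
  then show ?thesis
    by (rule has_field_derivative_transform_within_open[where S="{0<..}"])
      (use greater in \<open>auto simp: exp_inv_poly_def\<close>)
qed

lemma differentiable_upto_exp_inv_poly: "differentiable_upto n (exp_inv_poly p)"
proof (induction n arbitrary: p)
  case 0
  then show ?case
    using exp_inv_poly_has_real_derivative real_differentiable_def differentiable_upto_0 by blast
next
  case (Suc n)
  have "deriv (exp_inv_poly p) = exp_inv_poly (exp_inv_dpoly p)"
    by (intro ext DERIV_imp_deriv exp_inv_poly_has_real_derivative)
  with Suc show ?case
    using exp_inv_poly_has_real_derivative real_differentiable_def differentiable_upto_Suc by metis
qed

definition smooth_step :: "real \<Rightarrow> real" where
  "smooth_step x = exp_inv_poly 1 x / (exp_inv_poly 1 x + exp_inv_poly 1 (1 - x))"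

lemma smooth_step_denominator_pos: "exp_inv_poly 1 x + exp_inv_poly 1 (1 - x) > 0"
  by (cases "0 < x") (auto simp: exp_inv_poly_def add_pos_nonneg add_nonneg_pos)

lemma smooth_step_eq_0: "x \<le> 0 \<Longrightarrow> smooth_step x = 0"
  by (simp add: smooth_step_def exp_inv_poly_def)

lemma smooth_step_eq_1: "1 \<le> x \<Longrightarrow> smooth_step x = 1"
  using smooth_step_denominator_pos[of x] by (simp add: smooth_step_def exp_inv_poly_def)

lemma smooth_step_bounds: "0 \<le> smooth_step x \<and> smooth_step x \<le> 1"
  using smooth_step_denominator_pos[of x]
  by (auto simp: smooth_step_def exp_inv_poly_def divide_le_eq_1)

lemma differentiable_upto_smooth_step: "differentiable_upto n smooth_step"
proof -
  have "differentiable_upto n (\<lambda>x. exp_inv_poly 1 x + exp_inv_poly 1 ((-1) * x + 1))"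
    by (intro differentiable_upto_add differentiable_upto_affine differentiable_upto_exp_inv_poly)
  then have "differentiable_upto n (\<lambda>x. inverse (exp_inv_poly 1 x + exp_inv_poly 1 (1 - x)))"
    using differentiable_upto_inverse smooth_step_denominator_pos by (simp add: less_le)
  then show ?thesis
    unfolding smooth_step_def[abs_def] divide_inverse
    by (intro differentiable_upto_mult differentiable_upto_exp_inv_poly)
qed

definition cutoff :: "real \<Rightarrow> real \<Rightarrow> real \<Rightarrow> real \<Rightarrow> real" where
  "cutoff \<delta> p q x = smooth_step ((x - p - \<delta>) / \<delta>) * smooth_step ((q - \<delta> - x) / \<delta>)"

lemma differentiable_upto_cutoff: "differentiable_upto n (cutoff \<delta> p q)"
proof -
  have "differentiable_upto n
      (\<lambda>x. smooth_step (inverse \<delta> * x + - (p + \<delta>) / \<delta>) * smooth_step (- inverse \<delta> * x + (q - \<delta>) / \<delta>))"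
    by (intro differentiable_upto_mult differentiable_upto_affine differentiable_upto_smooth_step)
  then show ?thesis
    unfolding cutoff_def[abs_def] by (simp add: diff_divide_distrib divide_inverse algebra_simps)
qed

lemma cutoff_eq_0:
  assumes "0 < \<delta>" "x \<notin> {p + \<delta>..q - \<delta>}"
  shows "cutoff \<delta> p q x = 0"
  using assms by (cases "x < p + \<delta>") (auto simp: cutoff_def smooth_step_eq_0 divide_nonpos_pos)

lemma cutoff_eq_1:
  assumes "0 < \<delta>" "p + 2 * \<delta> \<le> x" "x \<le> q - 2 * \<delta>"
  shows "cutoff \<delta> p q x = 1"
  using assms by (simp add: cutoff_def smooth_step_eq_1 field_simps)

lemma abs_cutoff_le_1: "\<bar>cutoff \<delta> p q x\<bar> \<le> 1"
  using smooth_step_bounds[of "(x - p - \<delta>) / \<delta>"] smooth_step_bounds[of "(q - \<delta> - x) / \<delta>"]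
  by (simp add: cutoff_def abs_mult mult_le_one)

section \<open>The fundamental lemma of the calculus of variations\<close>

lemma test_funI:
  assumes "\<And>n. differentiable_upto n \<psi>" "0 < c" "d < L" "\<And>x. x \<notin> {c..d} \<Longrightarrow> \<psi> x = 0"
  shows "test_fun L \<psi>"
  using assms unfolding test_fun_def differentiable_upto_def by blast

lemma test_fun_imp_differentiable_upto: "test_fun L \<psi> \<Longrightarrow> differentiable_upto n \<psi>"
  unfolding test_fun_def differentiable_upto_def by blast

lemma test_fun_has_real_derivative:
  "test_fun L \<psi> \<Longrightarrow> (\<psi> has_real_derivative deriv \<psi> x) (at x)"
  by (meson DERIV_deriv_iff_real_differentiable differentiable_upto_imp_differentiable
      test_fun_imp_differentiable_upto)

lemma test_fun_continuous: "test_fun L \<psi> \<Longrightarrow> continuous_on UNIV \<psi>"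
  using differentiable_upto_imp_continuous test_fun_imp_differentiable_upto by blast

lemma test_fun_deriv_continuous: "test_fun L \<psi> \<Longrightarrow> continuous_on UNIV (deriv \<psi>)"
  by (meson differentiable_upto_Suc differentiable_upto_imp_continuous
      test_fun_imp_differentiable_upto)

lemma test_fun_boundary:
  assumes "test_fun L \<psi>"
  shows "\<psi> 0 = 0" "\<psi> L = 0"
  using assms unfolding test_fun_def by force+

lemma test_fun_cutoff: "0 < \<delta> \<Longrightarrow> 0 \<le> p \<Longrightarrow> q \<le> L \<Longrightarrow> test_fun L (cutoff \<delta> p q)"
  by (rule test_funI[where c = "p + \<delta>" and d = "q - \<delta>"])
    (auto simp: differentiable_upto_cutoff cutoff_eq_0)

lemma cutoff_tendsto_indicator:
  assumes pos: "\<And>n. 0 < \<delta> n" and lim: "\<delta> \<longlonglongrightarrow> 0"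
  shows "(\<lambda>n. cutoff (\<delta> n) p q x) \<longlonglongrightarrow> indicator {p<..<q} x"
proof (cases "p < x \<and> x < q")
  case True
  then have "0 < min (x - p) (q - x) / 2"
    by simp
  then have "\<forall>\<^sub>F n in sequentially. \<delta> n < min (x - p) (q - x) / 2"
    using order_tendstoD(2)[OF lim] by blast
  then have "\<forall>\<^sub>F n in sequentially. cutoff (\<delta> n) p q x = indicator {p<..<q} x"
    by eventually_elim (use True pos in \<open>auto intro!: cutoff_eq_1\<close>)
  then show ?thesis
    by (rule tendsto_eventually)
next
  case False
  then have "cutoff (\<delta> n) p q x = indicator {p<..<q} x" for n
    using pos[of n] by (auto intro!: cutoff_eq_0)
  then show ?thesis
    by simp
qed

lemma borel_measurable_Iv_ident [measurable]: "(\<lambda>x. x) \<in> borel_measurable (Iv L)"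
  using id_borel_measurable_lebesgue_on by (simp add: id_def)

lemma continuous_imp_borel_measurable_Iv: "continuous_on UNIV f \<Longrightarrow> f \<in> borel_measurable (Iv L)"
  by (rule continuous_imp_measurable_on_sets_lebesgue) (auto intro: continuous_on_subset)

lemma test_orthogonal_imp_interval_integral_eq_0:
  assumes w: "integrable (Iv L) w"
    and orth: "\<And>\<psi>. test_fun L \<psi> \<Longrightarrow> integral\<^sup>L (Iv L) (\<lambda>x. w x * \<psi> x) = 0"
    and "0 \<le> p" "q \<le> L"
  shows "integral\<^sup>L (Iv L) (\<lambda>x. w x * indicator {p<..<q} x) = 0"
proof -
  define \<delta> where "\<delta> n = inverse (real (Suc n))" for n
  have pos: "0 < \<delta> n" for n
    by (simp add: \<delta>_def)
  have lim: "\<delta> \<longlonglongrightarrow> 0"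
    unfolding \<delta>_def by (rule LIMSEQ_inverse_real_of_nat)
  have [measurable]: "w \<in> borel_measurable (Iv L)"
    using w by blast
  have "(\<lambda>n. integral\<^sup>L (Iv L) (\<lambda>x. w x * cutoff (\<delta> n) p q x))
      \<longlonglongrightarrow> integral\<^sup>L (Iv L) (\<lambda>x. w x * indicator {p<..<q} x)"
  proof (rule integral_dominated_convergence[where w = "\<lambda>x. norm (w x)"])
    show "(\<lambda>x. w x * cutoff (\<delta> n) p q x) \<in> borel_measurable (Iv L)" for n
      using differentiable_upto_imp_continuous[OF differentiable_upto_cutoff]
      by (intro borel_measurable_times) (auto intro: continuous_imp_borel_measurable_Iv)
    show "AE x in Iv L. norm (w x * cutoff (\<delta> n) p q x) \<le> norm (w x)" for n
      using abs_cutoff_le_1 by (auto simp: abs_mult intro!: mult_left_le)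
    show "AE x in Iv L. (\<lambda>n. w x * cutoff (\<delta> n) p q x) \<longlonglongrightarrow> w x * indicator {p<..<q} x"
      by (intro AE_I2 tendsto_mult_left cutoff_tendsto_indicator pos lim)
    show "(\<lambda>x. w x * indicator {p<..<q} x) \<in> borel_measurable (Iv L)"
      by measurable
    show "integrable (Iv L) (\<lambda>x. norm (w x))"
      using w by (rule integrable_norm)
  qed
  moreover have "integral\<^sup>L (Iv L) (\<lambda>x. w x * cutoff (\<delta> n) p q x) = 0" for n
    using assms pos by (intro orth test_fun_cutoff) auto
  ultimately show ?thesis
    using LIMSEQ_unique[OF _ tendsto_const] by simp
qed

lemma test_orthogonal_imp_Icc_integral_eq_0:
  assumes w: "integrable (Iv L) w"
    and orth: "\<And>\<psi>. test_fun L \<psi> \<Longrightarrow> integral\<^sup>L (Iv L) (\<lambda>x. w x * \<psi> x) = 0"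
  shows "integral\<^sup>L (Iv L) (\<lambda>x. w x * indicator {a..b} x) = 0"
proof -
  have "AE x in lebesgue. x \<noteq> a \<and> x \<noteq> b"
    using AE_lborel_singleton[of a] AE_lborel_singleton[of b] by (auto intro: AE_completion)
  then have "AE x in Iv L. indicator {a..b} x = (indicator {max a 0<..<min b L} x :: real)"
    by (subst AE_restrict_space_iff) (auto elim!: AE_mp simp: indicator_def)
  then have "integral\<^sup>L (Iv L) (\<lambda>x. w x * indicator {a..b} x)
      = integral\<^sup>L (Iv L) (\<lambda>x. w x * indicator {max a 0<..<min b L} x)"
    using w by (intro integral_cong_AE) (auto elim!: AE_mp)
  also have "\<dots> = 0"
    using w orth by (rule test_orthogonal_imp_interval_integral_eq_0) auto
  finally show ?thesis .
qed

lemma set_integral_eq_0_if_Icc_integrals_eq_0: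
  fixes W :: "real \<Rightarrow> real"
  assumes W: "integrable lebesgue W" and total: "integral\<^sup>L lebesgue W = 0"
    and Icc: "\<And>a b. (LINT x:{a..b}|lebesgue. W x) = 0"
    and A: "A \<in> sets lebesgue"
  shows "(LINT x:A|lebesgue. W x) = 0"
proof -
  have borel: "(LINT x:B|lebesgue. W x) = 0" if "B \<in> sets borel" for B
    using that
  proof (induction rule: borel_set_induct)
    case (compl B)
    have "integrable lebesgue (\<lambda>x. indicator B x *\<^sub>R W x)"
      using compl.hyps W by (intro integrable_mult_indicator) simp_all
    moreover have "(\<lambda>x. indicator (- B) x *\<^sub>R W x) = (\<lambda>x. W x - indicator B x *\<^sub>R W x)"
      by (auto simp: fun_eq_iff indicator_def)
    ultimately show ?case
      using compl.IH total W by (simp add: set_lebesgue_integral_def Bochner_Integration.integral_diff)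
  next
    case (union B)
    have "set_integrable lebesgue (\<Union>i. B i) W"
      unfolding set_integrable_def using union.hyps W by (intro integrable_mult_indicator) auto
    then have "(LINT x:(\<Union>i. B i)|lebesgue. W x) = (\<Sum>i. LINT x:B i|lebesgue. W x)"
      using union.hyps by (intro lebesgue_integral_countable_add) (auto simp: disjoint_family_on_def)
    with union.IH show ?case
      by simp
  qed (use Icc in \<open>simp_all add: set_lebesgue_integral_def\<close>)
  have measurable: "set_borel_measurable lebesgue C W" if "C \<in> sets lebesgue" for C
    unfolding set_borel_measurable_def using that W
    by (intro borel_measurable_scaleR borel_measurable_indicator) auto
  obtain B N where B: "B \<in> sets borel" and N: "negligible N" and A_eq: "A = B \<union> N"
    using sets_lebesgue_almost_borel[OF A] by metis
  have "AE x in lebesgue. x \<in> B \<longleftrightarrow> x \<in> A"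
    using AE_not_in[of N lebesgue] N A_eq by (auto simp: negligible_iff_null_sets elim: AE_mp)
  then have "(LINT x:A|lebesgue. W x) = (LINT x:B|lebesgue. W x)"
    using A B by (intro set_integral_cong_set measurable) simp_all
  with borel[OF B] show ?thesis
    by simp
qed

lemma test_orthogonal_imp_set_integral_eq_0:
  assumes w: "integrable (Iv L) w"
    and orth: "\<And>\<psi>. test_fun L \<psi> \<Longrightarrow> integral\<^sup>L (Iv L) (\<lambda>x. w x * \<psi> x) = 0"
    and A: "A \<in> sets lebesgue"
  shows "(LINT x:A|lebesgue. indicator {0<..<L} x * w x) = 0"
proof (rule set_integral_eq_0_if_Icc_integrals_eq_0[OF _ _ _ A])
  show "integrable lebesgue (\<lambda>x. indicator {0<..<L} x * w x)"
    using w integrable_restrict_space[of "{0<..<L}" lebesgue w] by simp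
  have restrict: "(LINT x:B|lebesgue. indicator {0<..<L} x * w x)
      = integral\<^sup>L (Iv L) (\<lambda>x. w x * indicator B x)" for B
    using integral_restrict_space[of "{0<..<L}" lebesgue "\<lambda>x. w x * indicator B x"]
    by (simp add: set_lebesgue_integral_def mult_ac)
  then show Icc: "(LINT x:{a..b}|lebesgue. indicator {0<..<L} x * w x) = 0" for a b
    using test_orthogonal_imp_Icc_integral_eq_0[OF w orth] by simp
  have "integral\<^sup>L lebesgue (\<lambda>x. indicator {0<..<L} x * w x)
      = (LINT x:{0..L}|lebesgue. indicator {0<..<L} x * w x)"
    unfolding set_lebesgue_integral_def
    by (intro arg_cong[where f = "integral\<^sup>L lebesgue"] ext) (auto simp: indicator_def)
  then show "integral\<^sup>L lebesgue (\<lambda>x. indicator {0<..<L} x * w x) = 0"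
    using Icc by simp
qed

lemma finite_measure_Iv: "finite_measure (Iv L)"
  by (rule finite_measure_lebesgue_on) simp

theorem test_orthogonal_imp_AE_zero:
  assumes w: "integrable (Iv L) w"
    and orth: "\<And>\<psi>. test_fun L \<psi> \<Longrightarrow> integral\<^sup>L (Iv L) (\<lambda>x. w x * \<psi> x) = 0"
  shows "AE x in Iv L. w x = 0"
proof -
  interpret finite_measure "Iv L"
    by (rule finite_measure_Iv)
  show ?thesis
  proof (rule density_zero[OF w])
    fix C
    assume "C \<in> sets (Iv L)"
    then have "C \<in> sets lebesgue"
      by (auto simp: sets_restrict_space_iff)
    then have "(LINT x:C|lebesgue. indicator {0<..<L} x * w x) = 0"
      using test_orthogonal_imp_set_integral_eq_0[OF w orth] by blast
    then show "set_lebesgue_integral (Iv L) C w = 0"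
      by (simp add: set_lebesgue_integral_def integral_restrict_space mult_ac)
  qed
qed

section \<open>Square-integrable functions on \<open>(0, L)\<close>\<close>

lemma integrable_mult_if_square_integrable:
  fixes f g :: "'a \<Rightarrow> real"
  assumes "f \<in> borel_measurable M" "g \<in> borel_measurable M"
    "integrable M (\<lambda>x. (f x)\<^sup>2)" "integrable M (\<lambda>x. (g x)\<^sup>2)"
  shows "integrable M (\<lambda>x. f x * g x)"
proof (rule Bochner_Integration.integrable_bound[where f = "\<lambda>x. (f x)\<^sup>2 + (g x)\<^sup>2"])
  have "\<bar>f x * g x\<bar> \<le> (f x)\<^sup>2 + (g x)\<^sup>2" for x
    using sum_squares_bound[of "\<bar>f x\<bar>" "\<bar>g x\<bar>"] abs_ge_zero[of "f x * g x"]
    unfolding abs_mult power2_abs by linarith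
  then show "AE x in M. norm (f x * g x) \<le> norm ((f x)\<^sup>2 + (g x)\<^sup>2)"
    by simp
qed (use assms in auto)

lemma Cauchy_Schwarz_integral:
  fixes f g :: "'a \<Rightarrow> real"
  assumes [measurable]: "f \<in> borel_measurable M" "g \<in> borel_measurable M"
    and f2: "integrable M (\<lambda>x. (f x)\<^sup>2)" and g2: "integrable M (\<lambda>x. (g x)\<^sup>2)"
  shows "integral\<^sup>L M (\<lambda>x. \<bar>f x * g x\<bar>)
    \<le> sqrt (integral\<^sup>L M (\<lambda>x. (f x)\<^sup>2)) * sqrt (integral\<^sup>L M (\<lambda>x. (g x)\<^sup>2))"
proof -
  have fg: "integrable M (\<lambda>x. \<bar>f x * g x\<bar>)"
    using integrable_mult_if_square_integrable[OF assms] by simp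
  have nn: "(\<integral>\<^sup>+x. ennreal ((h x)\<^sup>2) \<partial>M) = ennreal (integral\<^sup>L M (\<lambda>x. (h x)\<^sup>2))"
    if "integrable M (\<lambda>x. (h x)\<^sup>2)" for h :: "'a \<Rightarrow> real"
    using nn_integral_eq_integral[OF that] by simp
  have "(\<integral>\<^sup>+x. ennreal \<bar>f x\<bar> * ennreal \<bar>g x\<bar> \<partial>M)
      = ennreal (integral\<^sup>L M (\<lambda>x. \<bar>f x * g x\<bar>))"
    using nn_integral_eq_integral[OF fg] by (simp add: abs_mult ennreal_mult)
  with Cauchy_Schwarz_nn_integral[of "\<lambda>x. ennreal \<bar>f x\<bar>" M "\<lambda>x. ennreal \<bar>g x\<bar>"]
  have "ennreal ((integral\<^sup>L M (\<lambda>x. \<bar>f x * g x\<bar>))\<^sup>2)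
      \<le> ennreal (integral\<^sup>L M (\<lambda>x. (f x)\<^sup>2) * integral\<^sup>L M (\<lambda>x. (g x)\<^sup>2))"
    by (simp add: nn[OF f2] nn[OF g2] ennreal_power ennreal_mult)
  then have "(integral\<^sup>L M (\<lambda>x. \<bar>f x * g x\<bar>))\<^sup>2
      \<le> integral\<^sup>L M (\<lambda>x. (f x)\<^sup>2) * integral\<^sup>L M (\<lambda>x. (g x)\<^sup>2)"
    by (simp add: ennreal_le_iff)
  then show ?thesis
    by (simp add: real_le_rsqrt real_sqrt_mult[symmetric])
qed

lemma integral_Iv_const: "0 \<le> L \<Longrightarrow> integral\<^sup>L (Iv L) (\<lambda>x. c) = L * c"
  by (simp add: measure_restrict_space)

lemma L2_borel_measurable: "L2 L f \<Longrightarrow> f \<in> borel_measurable (Iv L)"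
  by (simp add: L2_def)

lemma L2_integrable_mult: "L2 L f \<Longrightarrow> L2 L g \<Longrightarrow> integrable (Iv L) (\<lambda>x. f x * g x)"
  by (rule integrable_mult_if_square_integrable) (auto simp: L2_def)

lemma L2_integrable: "L2 L f \<Longrightarrow> integrable (Iv L) f"
  unfolding L2_def by (blast intro: finite_measure.square_integrable_imp_integrable[OF finite_measure_Iv])

lemma L2_diff:
  assumes "L2 L f" "L2 L g"
  shows "L2 L (\<lambda>x. f x - g x)"
proof -
  have "integrable (Iv L) (\<lambda>x. (f x)\<^sup>2 + (g x)\<^sup>2 - 2 * (f x * g x))"
    using assms L2_integrable_mult[OF assms] by (auto simp: L2_def)
  moreover have "(\<lambda>x. (f x - g x)\<^sup>2) = (\<lambda>x. (f x)\<^sup>2 + (g x)\<^sup>2 - 2 * (f x * g x))"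
    by (simp add: fun_eq_iff power2_diff)
  ultimately show ?thesis
    using assms by (auto simp: L2_def)
qed

lemma L2_if_bounded:
  assumes "f \<in> borel_measurable (Iv L)" and "\<And>x. x \<in> {0<..<L} \<Longrightarrow> \<bar>f x\<bar> \<le> B"
  shows "L2 L f"
  unfolding L2_def
proof
  have "\<bar>f x\<bar>\<^sup>2 \<le> B\<^sup>2" if "x \<in> space (Iv L)" for x
    using assms(2)[of x] that by (intro power_mono) auto
  then show "integrable (Iv L) (\<lambda>x. (f x)\<^sup>2)"
    using assms(1)
    by (intro finite_measure.integrable_const_bound[OF finite_measure_Iv, where B = "B\<^sup>2"]) auto
qed (fact assms(1))

lemma continuous_bounded_Icc:
  fixes f :: "real \<Rightarrow> real"
  assumes "continuous_on UNIV f"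
  obtains B where "0 \<le> B" "\<And>x. x \<in> {a..b} \<Longrightarrow> \<bar>f x\<bar> \<le> B"
  using continuous_on_compact_bound[OF compact_Icc[of a b] continuous_on_subset[OF assms subset_UNIV]]
  by (metis real_norm_def)

lemma continuous_imp_L2: "continuous_on UNIV f \<Longrightarrow> L2 L f"
proof -
  assume f: "continuous_on UNIV f"
  then obtain B where "\<And>x. x \<in> {0..L} \<Longrightarrow> \<bar>f x\<bar> \<le> B"
    using continuous_bounded_Icc[where a = 0 and b = L] by blast
  then show ?thesis
    using f by (intro L2_if_bounded[where B = B] continuous_imp_borel_measurable_Iv) auto
qed

lemma test_fun_L2: "test_fun L \<psi> \<Longrightarrow> L2 L \<psi>"
  by (simp add: continuous_imp_L2 test_fun_continuous)

lemma test_fun_deriv_L2: "test_fun L \<psi> \<Longrightarrow> L2 L (deriv \<psi>)"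
  by (simp add: continuous_imp_L2 test_fun_deriv_continuous)

lemma integrable_mult_indicator_Ioo:
  fixes f :: "real \<Rightarrow> real"
  assumes "integrable (Iv L) f"
  shows "integrable (Iv L) (\<lambda>x. f x * indicator {a<..<b} x)"
proof (rule Bochner_Integration.integrable_bound[OF assms])
  show "(\<lambda>x. f x * indicator {a<..<b} x) \<in> borel_measurable (Iv L)"
    using assms by measurable
qed (auto simp: indicator_def)

lemma L2norm_nonneg: "0 \<le> L2norm L f"
  by (simp add: L2norm_def)

lemma abs_integral_mult_le_L2norm:
  "L2 L f \<Longrightarrow> L2 L g \<Longrightarrow> \<bar>integral\<^sup>L (Iv L) (\<lambda>x. f x * g x)\<bar> \<le> L2norm L f * L2norm L g"
  using Cauchy_Schwarz_integral[of f "Iv L" g] integral_abs_bound[of "Iv L" "\<lambda>x. f x * g x"]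
  unfolding L2norm_def L2_def by linarith

lemma integral_abs_le_L2norm:
  assumes "L2 L f" "0 \<le> L"
  shows "integral\<^sup>L (Iv L) (\<lambda>x. \<bar>f x\<bar>) \<le> sqrt L * L2norm L f"
proof -
  have "L2 L (\<lambda>x. 1)"
    by (simp add: continuous_imp_L2)
  then show ?thesis
    using Cauchy_Schwarz_integral[of f "Iv L" "\<lambda>x. 1"] assms
    unfolding L2norm_def L2_def by (simp add: measure_restrict_space mult.commute)
qed

lemma abs_integral_Ioo_le_L2norm:
  assumes "L2 L f" "0 \<le> L"
  shows "\<bar>integral\<^sup>L (Iv L) (\<lambda>t. f t * indicator {a<..<b} t)\<bar> \<le> sqrt L * L2norm L f"
proof -
  have "\<bar>integral\<^sup>L (Iv L) (\<lambda>t. f t * indicator {a<..<b} t)\<bar>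
      \<le> integral\<^sup>L (Iv L) (\<lambda>t. \<bar>f t * indicator {a<..<b} t\<bar>)"
    by (rule integral_abs_bound)
  also have "\<dots> \<le> integral\<^sup>L (Iv L) (\<lambda>t. \<bar>f t\<bar>)"
    using L2_integrable[OF assms(1)]
    by (intro integral_mono integrable_abs integrable_mult_indicator_Ioo)
      (auto simp: indicator_def)
  also have "\<dots> \<le> sqrt L * L2norm L f"
    by (rule integral_abs_le_L2norm[OF assms])
  finally show ?thesis .
qed

lemma integral_Iv_FTC:
  fixes F f :: "real \<Rightarrow> real"
  assumes x: "0 \<le> x" "x \<le> L"
    and F: "\<And>t. t \<in> {0..x} \<Longrightarrow> (F has_real_derivative f t) (at t within {0..x})"
    and f: "continuous_on {0..x} f"
  shows "integral\<^sup>L (Iv L) (\<lambda>t. f t * indicator {0<..<x} t) = F x - F 0"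
proof -
  have "integral\<^sup>L (Iv L) (\<lambda>t. f t * indicator {0<..<x} t)
      = integral\<^sup>L lebesgue (\<lambda>t. indicator {0<..<L} t *\<^sub>R (f t * indicator {0<..<x} t))"
    by (simp add: integral_restrict_space)
  also have "\<dots> = integral\<^sup>L lebesgue (\<lambda>t. indicator {0<..<x} t *\<^sub>R f t)"
    using x by (intro Bochner_Integration.integral_cong) (auto simp: indicator_def)
  also have "\<dots> = integral\<^sup>L (lebesgue_on {0<..<x}) f"
    by (simp add: integral_restrict_space)
  also have "\<dots> = integral {0<..<x} f"
  proof (rule lebesgue_integral_eq_integral)
    have "f absolutely_integrable_on {0<..<x}"
      using absolutely_integrable_continuous_real[OF f] absolutely_integrable_on_Icc_iff_Ioo
      by blast
    then show "integrable (lebesgue_on {0<..<x}) f"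
      by (rule absolutely_integrable_imp_integrable) simp
  qed simp
  also have "\<dots> = integral {0..x} f"
    by (rule integral_open_interval_real[symmetric])
  also have "\<dots> = F x - F 0"
    using F by (intro integral_unique fundamental_theorem_of_calculus x(1))
      (simp add: has_real_derivative_iff_has_vector_derivative[symmetric])
  finally show ?thesis .
qed

lemma test_fun_eq_integral_deriv:
  assumes "test_fun L \<psi>" "0 \<le> x" "x \<le> L"
  shows "\<psi> x = integral\<^sup>L (Iv L) (\<lambda>t. deriv \<psi> t * indicator {0<..<x} t)"
proof -
  have "integral\<^sup>L (Iv L) (\<lambda>t. deriv \<psi> t * indicator {0<..<x} t) = \<psi> x - \<psi> 0"
    using assms test_fun_has_real_derivative[OF assms(1)]
      test_fun_deriv_continuous[OF assms(1)]
    by (intro integral_Iv_FTC) (auto intro: has_field_derivative_at_within continuous_on_subset)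
  then show ?thesis
    using test_fun_boundary[OF assms(1)] by simp
qed

section \<open>Functions in \<open>H\<^sup>1\<^sub>0(0, L)\<close>\<close>

lemma weak_deriv_AE_unique:
  assumes "L2 L v" "L2 L w" "weak_deriv L u v" "weak_deriv L u w"
  shows "AE x in Iv L. v x = w x"
proof -
  have "AE x in Iv L. v x - w x = 0"
  proof (rule test_orthogonal_imp_AE_zero)
    show "integrable (Iv L) (\<lambda>x. v x - w x)"
      using assms by (intro L2_integrable L2_diff)
    fix \<psi>
    assume \<psi>: "test_fun L \<psi>"
    have "integral\<^sup>L (Iv L) (\<lambda>x. u x * deriv \<psi> x) = - integral\<^sup>L (Iv L) (\<lambda>x. v x * \<psi> x)"
      "integral\<^sup>L (Iv L) (\<lambda>x. u x * deriv \<psi> x) = - integral\<^sup>L (Iv L) (\<lambda>x. w x * \<psi> x)"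
      using assms(3,4) \<psi> unfolding weak_deriv_def by blast+
    moreover have "integral\<^sup>L (Iv L) (\<lambda>x. (v x - w x) * \<psi> x)
        = integral\<^sup>L (Iv L) (\<lambda>x. v x * \<psi> x) - integral\<^sup>L (Iv L) (\<lambda>x. w x * \<psi> x)"
      unfolding left_diff_distrib
      using assms(1,2) test_fun_L2[OF \<psi>] by (intro Bochner_Integration.integral_diff L2_integrable_mult)
    ultimately show "integral\<^sup>L (Iv L) (\<lambda>x. (v x - w x) * \<psi> x) = 0"
      by simp
  qed
  then show ?thesis
    by simp
qed

lemma L2_limit_AE_unique:
  assumes "L2 L u" "L2 L w" "\<And>n. L2 L (f n)"
    and "(\<lambda>n. integral\<^sup>L (Iv L) (\<lambda>x. (f n x - u x)\<^sup>2)) \<longlonglongrightarrow> 0"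
    and "(\<lambda>n. integral\<^sup>L (Iv L) (\<lambda>x. (f n x - w x)\<^sup>2)) \<longlonglongrightarrow> 0"
  shows "AE x in Iv L. u x = w x"
proof -
  have uw: "L2 L (\<lambda>x. u x - w x)"
    using assms by (intro L2_diff)
  have "integral\<^sup>L (Iv L) (\<lambda>x. (u x - w x)\<^sup>2)
      \<le> 2 * integral\<^sup>L (Iv L) (\<lambda>x. (f n x - u x)\<^sup>2) + 2 * integral\<^sup>L (Iv L) (\<lambda>x. (f n x - w x)\<^sup>2)"
    for n
  proof -
    have "(u x - w x)\<^sup>2 \<le> 2 * (f n x - u x)\<^sup>2 + 2 * (f n x - w x)\<^sup>2" for x
      using sum_squares_bound[of "f n x - u x" "w x - f n x"] by (simp add: power2_eq_square algebra_simps)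
    then have "integral\<^sup>L (Iv L) (\<lambda>x. (u x - w x)\<^sup>2)
        \<le> integral\<^sup>L (Iv L) (\<lambda>x. 2 * (f n x - u x)\<^sup>2 + 2 * (f n x - w x)\<^sup>2)"
      using uw L2_diff[OF assms(3) assms(1)] L2_diff[OF assms(3) assms(2)]
      by (intro integral_mono) (auto simp: L2_def)
    then show ?thesis
      using L2_diff[OF assms(3) assms(1)] L2_diff[OF assms(3) assms(2)] by (simp add: L2_def)
  qed
  moreover have "(\<lambda>n. 2 * integral\<^sup>L (Iv L) (\<lambda>x. (f n x - u x)\<^sup>2)
      + 2 * integral\<^sup>L (Iv L) (\<lambda>x. (f n x - w x)\<^sup>2)) \<longlonglongrightarrow> 0"
    using tendsto_add[OF tendsto_mult_right_zero tendsto_mult_right_zero, OF assms(4,5)] by simp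
  ultimately have "integral\<^sup>L (Iv L) (\<lambda>x. (u x - w x)\<^sup>2) \<le> 0"
    by (intro LIMSEQ_le_const[where x = 0]) blast+
  then have "integral\<^sup>L (Iv L) (\<lambda>x. (u x - w x)\<^sup>2) = 0"
    by (rule antisym) simp_all
  then have "AE x in Iv L. (u x - w x)\<^sup>2 = 0"
    using uw by (subst integral_nonneg_eq_0_iff_AE[symmetric]) (auto simp: L2_def)
  then show ?thesis
    by simp
qed

lemma integral_comp_mult_deriv_eq_0:
  assumes h: "continuous_on UNIV h" and \<psi>: "test_fun L \<psi>" and "0 \<le> L"
  shows "integral\<^sup>L (Iv L) (\<lambda>x. h (\<psi> x) * deriv \<psi> x) = 0"
proof -
  obtain R where R: "\<And>x. x \<in> {0..L} \<Longrightarrow> \<bar>\<psi> x\<bar> \<le> R"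
    using continuous_bounded_Icc[OF test_fun_continuous[OF \<psi>]] by blast
  define H where "H s = integral {- R - 1..s} h" for s
  have H: "(H has_real_derivative h s) (at s)" if "s \<in> {- R - 1<..<R + 1}" for s
  proof -
    have "(H has_real_derivative h s) (at s within {- R - 1..R + 1})"
      unfolding H_def[abs_def] using that
      by (intro integral_has_real_derivative continuous_on_subset[OF h]) auto
    moreover have "at s within {- R - 1..R + 1} = at s"
      by (rule at_within_interior) (use that in simp)
    ultimately show ?thesis
      by simp
  qed
  have "integral\<^sup>L (Iv L) (\<lambda>t. h (\<psi> t) * deriv \<psi> t * indicator {0<..<L} t) = H (\<psi> L) - H (\<psi> 0)"
  proof (rule integral_Iv_FTC)
    fix t
    assume "t \<in> {0..L}"
    then have "\<psi> t \<in> {- R - 1<..<R + 1}"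
      using R[of t] by auto
    from DERIV_chain2[OF H[OF this] test_fun_has_real_derivative[OF \<psi>]]
    show "((\<lambda>t. H (\<psi> t)) has_real_derivative h (\<psi> t) * deriv \<psi> t) (at t within {0..L})"
      by (rule has_field_derivative_at_within)
  next
    show "continuous_on {0..L} (\<lambda>t. h (\<psi> t) * deriv \<psi> t)"
      using continuous_on_compose2[OF h test_fun_continuous[OF \<psi>]]
        test_fun_deriv_continuous[OF \<psi>]
      by (intro continuous_on_mult) (auto intro: continuous_on_subset)
  qed (use assms(3) in simp_all)
  moreover have "integral\<^sup>L (Iv L) (\<lambda>t. h (\<psi> t) * deriv \<psi> t * indicator {0<..<L} t)
      = integral\<^sup>L (Iv L) (\<lambda>t. h (\<psi> t) * deriv \<psi> t)"
    by (rule Bochner_Integration.integral_cong) auto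
  ultimately show ?thesis
    using test_fun_boundary[OF \<psi>] by simp
qed


lemma abs_real_of_ereal_min_le:
  "\<bar>z\<bar> \<noteq> \<infinity> \<Longrightarrow> 0 \<le> c \<Longrightarrow> \<bar>real_of_ereal (min z (ereal c))\<bar> \<le> \<bar>real_of_ereal z\<bar>"
  by (cases z) (auto simp: min_def)

lemma real_of_ereal_min_tendsto:
  assumes "\<bar>z\<bar> \<noteq> \<infinity>"
  shows "(\<lambda>n. real_of_ereal (min z (ereal (real n)))) \<longlonglongrightarrow> real_of_ereal z"
proof (rule tendsto_eventually)
  obtain r where z: "z = ereal r"
    using assms by (cases z) auto
  show "\<forall>\<^sub>F n in sequentially. real_of_ereal (min z (ereal (real n))) = real_of_ereal z"
    using eventually_ge_at_top[of "nat \<lceil>r\<rceil>"]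
    by eventually_elim (use real_nat_ceiling_ge[of r] in \<open>auto simp: z min_def\<close>)
qed

lemma continuous_real_of_ereal_min:
  fixes \<phi> :: "real \<Rightarrow> ereal"
  assumes "continuous_on UNIV \<phi>" "\<And>s. \<phi> s \<noteq> -\<infinity>"
  shows "continuous_on UNIV (\<lambda>s. real_of_ereal (min (\<phi> s) (ereal c)))"
  unfolding continuous_on_eq_continuous_at[OF open_UNIV, simplified]
proof
  fix s
  have "((\<lambda>t. min (\<phi> t) (ereal c)) \<longlongrightarrow> min (\<phi> s) (ereal c)) (at s)"
    using assms(1) by (intro tendsto_min tendsto_const) (simp add: continuous_on_def)
  moreover have "\<bar>min (\<phi> s) (ereal c)\<bar> \<noteq> \<infinity>"
    using assms(2)[of s] by (cases "\<phi> s") (auto simp: min_def)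
  ultimately show "isCont (\<lambda>s. real_of_ereal (min (\<phi> s) (ereal c))) s"
    unfolding isCont_def by (intro lim_real_of_ereal) (simp add: ereal_real')
qed

locale H10_approximation =
  fixes L :: real and u u' :: "real \<Rightarrow> real" and \<psi>s :: "nat \<Rightarrow> real \<Rightarrow> real"
  assumes L_pos: "0 < L" and L2_u: "L2 L u" and L2_u': "L2 L u'" and weak_deriv: "weak_deriv L u u'"
    and test: "\<And>n. test_fun L (\<psi>s n)"
    and approx: "(\<lambda>n. integral\<^sup>L (Iv L) (\<lambda>x. (\<psi>s n x - u x)\<^sup>2)) \<longlonglongrightarrow> 0"
    and approx_deriv: "(\<lambda>n. integral\<^sup>L (Iv L) (\<lambda>x. (deriv (\<psi>s n) x - u' x)\<^sup>2)) \<longlonglongrightarrow> 0"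
begin

definition antideriv :: "real \<Rightarrow> real" where
  "antideriv x = integral\<^sup>L (Iv L) (\<lambda>t. u' t * indicator {0<..<x} t)"

definition err :: "nat \<Rightarrow> real" where
  "err n = sqrt L * L2norm L (\<lambda>x. deriv (\<psi>s n) x - u' x)"

lemma L2_deriv_diff: "L2 L (\<lambda>x. deriv (\<psi>s n) x - u' x)"
  by (intro L2_diff test_fun_deriv_L2 test L2_u')

lemma err_tendsto_0: "err \<longlonglongrightarrow> 0"
  unfolding err_def L2norm_def
  using tendsto_mult[OF tendsto_const tendsto_real_sqrt[OF approx_deriv]] by simp

lemma approx_uniform: "x \<in> {0..L} \<Longrightarrow> \<bar>\<psi>s n x - antideriv x\<bar> \<le> err n"
proof -
  assume x: "x \<in> {0..L}"
  have "\<psi>s n x - antideriv x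
      = integral\<^sup>L (Iv L) (\<lambda>t. deriv (\<psi>s n) t * indicator {0<..<x} t)
        - integral\<^sup>L (Iv L) (\<lambda>t. u' t * indicator {0<..<x} t)"
    using test_fun_eq_integral_deriv[OF test, of x n] x by (simp add: antideriv_def)
  also have "\<dots> = integral\<^sup>L (Iv L) (\<lambda>t. (deriv (\<psi>s n) t - u' t) * indicator {0<..<x} t)"
    unfolding left_diff_distrib
    by (intro Bochner_Integration.integral_diff[symmetric] integrable_mult_indicator_Ioo
        L2_integrable test_fun_deriv_L2 test L2_u')
  finally show ?thesis
    using abs_integral_Ioo_le_L2norm[OF L2_deriv_diff] L_pos by (simp add: err_def)
qed

lemma approx_tendsto: "x \<in> {0..L} \<Longrightarrow> (\<lambda>n. \<psi>s n x) \<longlonglongrightarrow> antideriv x"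
  by (rule LIM_zero_cancel, rule Lim_null_comparison[OF _ err_tendsto_0])
    (simp add: approx_uniform)

lemma borel_measurable_antideriv: "antideriv \<in> borel_measurable (Iv L)"
  by (rule borel_measurable_LIMSEQ_real[where u = \<psi>s])
    (auto intro: approx_tendsto continuous_imp_borel_measurable_Iv test_fun_continuous test)

lemma abs_antideriv_le: "\<bar>antideriv x\<bar> \<le> sqrt L * L2norm L u'"
  unfolding antideriv_def using abs_integral_Ioo_le_L2norm[OF L2_u'] L_pos by simp

lemma L2_antideriv: "L2 L antideriv"
  by (rule L2_if_bounded[OF borel_measurable_antideriv abs_antideriv_le])

lemma AE_eq_antideriv: "AE x in Iv L. u x = antideriv x"
proof (rule L2_limit_AE_unique[OF L2_u L2_antideriv])
  show "L2 L (\<psi>s n)" for n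
    by (intro test_fun_L2 test)
  have bound: "integral\<^sup>L (Iv L) (\<lambda>x. (\<psi>s n x - antideriv x)\<^sup>2) \<le> integral\<^sup>L (Iv L) (\<lambda>x. (err n)\<^sup>2)" for n
  proof (rule integral_mono)
    show "integrable (Iv L) (\<lambda>x. (\<psi>s n x - antideriv x)\<^sup>2)"
      using L2_diff[OF test_fun_L2[OF test] L2_antideriv] by (simp add: L2_def)
    show "(\<psi>s n x - antideriv x)\<^sup>2 \<le> (err n)\<^sup>2" if "x \<in> space (Iv L)" for x
      using power_mono[OF approx_uniform[of x n], of 2] that by simp
  qed (simp add: finite_measure.integrable_const[OF finite_measure_Iv])
  have lim: "(\<lambda>n. integral\<^sup>L (Iv L) (\<lambda>x. (err n)\<^sup>2)) \<longlonglongrightarrow> 0"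
    using tendsto_mult[OF tendsto_const tendsto_power[OF err_tendsto_0, of 2], of L] L_pos
    by (simp only: integral_Iv_const less_imp_le) simp
  have norm: "norm (integral\<^sup>L (Iv L) (\<lambda>x. (\<psi>s n x - antideriv x)\<^sup>2))
      \<le> integral\<^sup>L (Iv L) (\<lambda>x. (err n)\<^sup>2)" for n
    using bound[of n] by simp
  show "(\<lambda>n. integral\<^sup>L (Iv L) (\<lambda>x. (\<psi>s n x - antideriv x)\<^sup>2)) \<longlonglongrightarrow> 0"
    by (rule Lim_null_comparison[OF always_eventually lim]) (rule allI, rule norm)
qed (fact approx)

lemma integral_mult_deriv_tendsto:
  assumes F: "L2 L F"
  shows "(\<lambda>n. integral\<^sup>L (Iv L) (\<lambda>x. F x * deriv (\<psi>s n) x)) \<longlonglongrightarrow> integral\<^sup>L (Iv L) (\<lambda>x. F x * u' x)"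
proof (rule LIM_zero_cancel, rule Lim_null_comparison[OF always_eventually])
  have "integral\<^sup>L (Iv L) (\<lambda>x. F x * deriv (\<psi>s n) x) - integral\<^sup>L (Iv L) (\<lambda>x. F x * u' x)
      = integral\<^sup>L (Iv L) (\<lambda>x. F x * (deriv (\<psi>s n) x - u' x))" for n
    unfolding right_diff_distrib
    by (intro Bochner_Integration.integral_diff[symmetric] L2_integrable_mult F
        test_fun_deriv_L2 test L2_u')
  then show "\<forall>n. norm (integral\<^sup>L (Iv L) (\<lambda>x. F x * deriv (\<psi>s n) x) - integral\<^sup>L (Iv L) (\<lambda>x. F x * u' x))
      \<le> L2norm L F * L2norm L (\<lambda>x. deriv (\<psi>s n) x - u' x)"
    using abs_integral_mult_le_L2norm[OF F L2_deriv_diff] by simp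
  show "(\<lambda>n. L2norm L F * L2norm L (\<lambda>x. deriv (\<psi>s n) x - u' x)) \<longlonglongrightarrow> 0"
    unfolding L2norm_def[of L "\<lambda>x. deriv (\<psi>s _) x - u' x"]
    using tendsto_mult[OF tendsto_const tendsto_real_sqrt[OF approx_deriv]] by simp
qed

lemma comp_approx_bounded:
  fixes h :: "real \<Rightarrow> real"
  assumes h: "continuous_on UNIV h"
  obtains M where "0 \<le> M" "\<And>n x. x \<in> {0..L} \<Longrightarrow> \<bar>h (\<psi>s n x)\<bar> \<le> M"
    "\<And>x. x \<in> {0..L} \<Longrightarrow> \<bar>h (antideriv x)\<bar> \<le> M"
proof -
  obtain E where E: "\<And>n. \<bar>err n\<bar> \<le> E"
    using BseqE[OF convergent_imp_Bseq[OF convergentI[OF err_tendsto_0]]] by auto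
  define R where "R = sqrt L * L2norm L u' + E"
  have range: "\<psi>s n x \<in> {-R..R}" "antideriv x \<in> {-R..R}" if "x \<in> {0..L}" for n x
    using approx_uniform[OF that, of n] abs_antideriv_le[of x] E[of n]
    by (auto simp: R_def abs_le_iff)
  obtain M where "0 \<le> M" and M: "\<And>s. s \<in> {-R..R} \<Longrightarrow> \<bar>h s\<bar> \<le> M"
    using continuous_bounded_Icc[OF h] by blast
  show ?thesis
  proof (rule that[OF \<open>0 \<le> M\<close>])
    show "\<bar>h (\<psi>s n x)\<bar> \<le> M" "\<bar>h (antideriv x)\<bar> \<le> M" if "x \<in> {0..L}" for n x
      using M range[OF that] by blast+
  qed
qed

lemma integral_comp_approx_mult_tendsto:
  assumes h: "continuous_on UNIV h"
  shows "(\<lambda>n. integral\<^sup>L (Iv L) (\<lambda>x. h (\<psi>s n x) * u' x))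
    \<longlonglongrightarrow> integral\<^sup>L (Iv L) (\<lambda>x. h (antideriv x) * u' x)"
proof -
  obtain M where "0 \<le> M" and M: "\<And>n x. x \<in> {0..L} \<Longrightarrow> \<bar>h (\<psi>s n x)\<bar> \<le> M"
    and "\<And>x. x \<in> {0..L} \<Longrightarrow> \<bar>h (antideriv x)\<bar> \<le> M"
    using comp_approx_bounded[OF h] by blast
  have [measurable]: "u' \<in> borel_measurable (Iv L)" "h \<in> borel_measurable borel"
    using L2_u' h by (auto simp: L2_def intro: borel_measurable_continuous_onI)
  show ?thesis
  proof (rule integral_dominated_convergence[where w = "\<lambda>x. M * \<bar>u' x\<bar>"])
    show "(\<lambda>x. h (\<psi>s n x) * u' x) \<in> borel_measurable (Iv L)" for n
      using continuous_imp_borel_measurable_Iv[OF test_fun_continuous[OF test]] by measurable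
    show "(\<lambda>x. h (antideriv x) * u' x) \<in> borel_measurable (Iv L)"
      using borel_measurable_antideriv by measurable
    show "integrable (Iv L) (\<lambda>x. M * \<bar>u' x\<bar>)"
      using L2_integrable[OF L2_u'] by simp
    show "AE x in Iv L. norm (h (\<psi>s n x) * u' x) \<le> M * \<bar>u' x\<bar>" for n
      using M by (auto simp: abs_mult intro!: mult_right_mono)
    show "AE x in Iv L. (\<lambda>n. h (\<psi>s n x) * u' x) \<longlonglongrightarrow> h (antideriv x) * u' x"
    proof (rule AE_I2)
      fix x
      assume "x \<in> space (Iv L)"
      then have "(\<lambda>n. \<psi>s n x) \<longlonglongrightarrow> antideriv x"
        by (intro approx_tendsto) auto
      moreover have "isCont h (antideriv x)"
        using h by (simp add: continuous_on_eq_continuous_at)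
      ultimately show "(\<lambda>n. h (\<psi>s n x) * u' x) \<longlonglongrightarrow> h (antideriv x) * u' x"
        by (intro tendsto_mult_right) (rule isCont_tendsto_compose)
    qed
  qed
qed

lemma integral_comp_approx_mult_tendsto_0:
  assumes h: "continuous_on UNIV h"
  shows "(\<lambda>n. integral\<^sup>L (Iv L) (\<lambda>x. h (\<psi>s n x) * u' x)) \<longlonglongrightarrow> 0"
proof -
  obtain M where "0 \<le> M" and M: "\<And>n x. x \<in> {0..L} \<Longrightarrow> \<bar>h (\<psi>s n x)\<bar> \<le> M"
    and "\<And>x. x \<in> {0..L} \<Longrightarrow> \<bar>h (antideriv x)\<bar> \<le> M"
    using comp_approx_bounded[OF h] by blast
  have bound: "norm (integral\<^sup>L (Iv L) (\<lambda>x. h (\<psi>s n x) * u' x)) \<le> M * err n"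
    for n
  proof -
    have h\<psi>: "L2 L (\<lambda>x. h (\<psi>s n x))"
      by (intro continuous_imp_L2 continuous_on_compose2[OF h test_fun_continuous[OF test]]) auto
    \<comment> \<open>\<open>\<integral> h(\<psi>\<^sub>n) \<psi>\<^sub>n' = 0\<close>, so only \<open>\<integral> h(\<psi>\<^sub>n) (\<psi>\<^sub>n' - u')\<close> remains.\<close>
    have "\<bar>integral\<^sup>L (Iv L) (\<lambda>x. h (\<psi>s n x) * u' x)\<bar>
        = \<bar>integral\<^sup>L (Iv L) (\<lambda>x. h (\<psi>s n x) * (deriv (\<psi>s n) x - u' x))\<bar>"
      using integral_comp_mult_deriv_eq_0[OF h test] L_pos L2_integrable_mult[OF h\<psi> L2_u']
        L2_integrable_mult[OF h\<psi> test_fun_deriv_L2[OF test]]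
      by (simp add: right_diff_distrib Bochner_Integration.integral_diff)
    also have "\<dots> \<le> integral\<^sup>L (Iv L) (\<lambda>x. \<bar>h (\<psi>s n x) * (deriv (\<psi>s n) x - u' x)\<bar>)"
      by (rule integral_abs_bound)
    also have "\<dots> \<le> integral\<^sup>L (Iv L) (\<lambda>x. M * \<bar>deriv (\<psi>s n) x - u' x\<bar>)"
    proof (rule integral_mono)
      show "integrable (Iv L) (\<lambda>x. \<bar>h (\<psi>s n x) * (deriv (\<psi>s n) x - u' x)\<bar>)"
        using L2_integrable_mult[OF h\<psi> L2_deriv_diff] by (rule integrable_abs)
      show "integrable (Iv L) (\<lambda>x. M * \<bar>deriv (\<psi>s n) x - u' x\<bar>)"
        using L2_integrable[OF L2_deriv_diff] by simp
      show "\<bar>h (\<psi>s n x) * (deriv (\<psi>s n) x - u' x)\<bar> \<le> M * \<bar>deriv (\<psi>s n) x - u' x\<bar>"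
        if "x \<in> space (Iv L)" for x
        using M[of x n] that unfolding abs_mult by (intro mult_right_mono) auto
    qed
    also have "\<dots> \<le> M * err n"
      using integral_abs_le_L2norm[OF L2_deriv_diff] L_pos \<open>0 \<le> M\<close>
      by (simp add: err_def mult_left_mono)
    finally show ?thesis
      by simp
  qed
  have "(\<lambda>n. M * err n) \<longlonglongrightarrow> 0"
    using tendsto_mult_right_zero[OF err_tendsto_0] by simp
  then show ?thesis
    by (rule Lim_null_comparison[OF always_eventually[OF allI[OF bound]]])
qed

lemma integral_comp_mult_eq_0:
  assumes h: "continuous_on UNIV h"
  shows "integral\<^sup>L (Iv L) (\<lambda>x. h (u x) * u' x) = 0"
proof -
  have [measurable]: "u \<in> borel_measurable (Iv L)" "u' \<in> borel_measurable (Iv L)"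
    "h \<in> borel_measurable borel"
    using L2_u L2_u' h by (auto simp: L2_def intro: borel_measurable_continuous_onI)
  have "integral\<^sup>L (Iv L) (\<lambda>x. h (u x) * u' x) = integral\<^sup>L (Iv L) (\<lambda>x. h (antideriv x) * u' x)"
  proof (rule integral_cong_AE)
    show "(\<lambda>x. h (antideriv x) * u' x) \<in> borel_measurable (Iv L)"
      using borel_measurable_antideriv by measurable
    show "AE x in Iv L. h (u x) * u' x = h (antideriv x) * u' x"
      using AE_eq_antideriv by eventually_elim simp
  qed measurable
  also have "\<dots> = 0"
    using integral_comp_approx_mult_tendsto[OF h] integral_comp_approx_mult_tendsto_0[OF h]
    by (rule LIMSEQ_unique)
  finally show ?thesis .
qed

end

context H10_approximation
begin

lemma integral_ereal_comp_mult_eq_0: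
  fixes \<phi> :: "real \<Rightarrow> ereal"
  assumes \<phi>: "continuous_on UNIV \<phi>" "\<And>s. \<phi> s \<noteq> -\<infinity>"
    and finite: "AE x in Iv L. \<phi> (u x) \<noteq> \<infinity>"
    and L2_\<phi>: "L2 L (\<lambda>x. real_of_ereal (\<phi> (u x)))"
  shows "integral\<^sup>L (Iv L) (\<lambda>x. real_of_ereal (\<phi> (u x)) * u' x) = 0"
proof -
  define \<phi>n where "\<phi>n n s = real_of_ereal (min (\<phi> s) (ereal (real n)))" for n s
  have cont: "continuous_on UNIV (\<phi>n n)" for n
    unfolding \<phi>n_def[abs_def] using \<phi> by (rule continuous_real_of_ereal_min)
  have [measurable]: "u \<in> borel_measurable (Iv L)" "u' \<in> borel_measurable (Iv L)"
    "\<phi> \<in> borel_measurable borel" "\<phi>n n \<in> borel_measurable borel" for n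
    using L2_u L2_u' \<phi>(1) cont by (auto simp: L2_def intro: borel_measurable_continuous_onI)
  have finite': "AE x in Iv L. \<bar>\<phi> (u x)\<bar> \<noteq> \<infinity>"
    using finite by eventually_elim (use \<phi>(2) in auto)
  have "(\<lambda>n. integral\<^sup>L (Iv L) (\<lambda>x. \<phi>n n (u x) * u' x))
      \<longlonglongrightarrow> integral\<^sup>L (Iv L) (\<lambda>x. real_of_ereal (\<phi> (u x)) * u' x)"
  proof (rule integral_dominated_convergence[where w = "\<lambda>x. \<bar>real_of_ereal (\<phi> (u x)) * u' x\<bar>"])
    show "integrable (Iv L) (\<lambda>x. \<bar>real_of_ereal (\<phi> (u x)) * u' x\<bar>)"
      using L2_integrable_mult[OF L2_\<phi> L2_u'] by (rule integrable_abs)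
    show "AE x in Iv L. norm (\<phi>n n (u x) * u' x) \<le> \<bar>real_of_ereal (\<phi> (u x)) * u' x\<bar>" for n
      using finite'
    proof eventually_elim
      case (elim x)
      then show ?case
        unfolding \<phi>n_def real_norm_def abs_mult
        by (intro mult_right_mono abs_real_of_ereal_min_le) simp_all
    qed
    show "AE x in Iv L. (\<lambda>n. \<phi>n n (u x) * u' x) \<longlonglongrightarrow> real_of_ereal (\<phi> (u x)) * u' x"
      using finite' by eventually_elim
        (simp add: \<phi>n_def tendsto_mult_right real_of_ereal_min_tendsto)
  qed measurable
  moreover have "integral\<^sup>L (Iv L) (\<lambda>x. \<phi>n n (u x) * u' x) = 0" for n
    by (rule integral_comp_mult_eq_0[OF cont])
  ultimately show ?thesis
    using LIMSEQ_unique[OF _ tendsto_const] by simp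
qed

end

lemma H10_approximationE:
  assumes "0 < L" "H10 L u" "L2 L v" "weak_deriv L u v"
  obtains \<psi>s where "H10_approximation L u v \<psi>s"
proof -
  obtain v0 \<psi>s where u: "L2 L u" and v0: "L2 L v0" "weak_deriv L u v0"
    and test: "\<And>n. test_fun L (\<psi>s n)"
    and approx: "(\<lambda>n. integral\<^sup>L (Iv L) (\<lambda>x. (\<psi>s n x - u x)\<^sup>2)) \<longlonglongrightarrow> 0"
    and approx_deriv: "(\<lambda>n. integral\<^sup>L (Iv L) (\<lambda>x. (deriv (\<psi>s n) x - v0 x)\<^sup>2)) \<longlonglongrightarrow> 0"
    using assms(2) unfolding H10_def by blast
  have "AE x in Iv L. v x = v0 x"
    by (rule weak_deriv_AE_unique[OF assms(3) v0(1) assms(4) v0(2)])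
  then have "integral\<^sup>L (Iv L) (\<lambda>x. (deriv (\<psi>s n) x - v x)\<^sup>2)
      = integral\<^sup>L (Iv L) (\<lambda>x. (deriv (\<psi>s n) x - v0 x)\<^sup>2)" for n
    using L2_diff[OF test_fun_deriv_L2[OF test] assms(3)] L2_diff[OF test_fun_deriv_L2[OF test] v0(1)]
    by (intro integral_cong_AE) (auto simp: L2_def elim!: AE_mp)
  with approx_deriv have "(\<lambda>n. integral\<^sup>L (Iv L) (\<lambda>x. (deriv (\<psi>s n) x - v x)\<^sup>2)) \<longlonglongrightarrow> 0"
    by simp
  with assms u test approx show ?thesis
    by (intro that) unfold_locales
qed

section \<open>The energy identity and the a priori bounds\<close>

lemma L2_mult_bounded:
  assumes "f \<in> borel_measurable (Iv L)" "AE x in Iv L. \<bar>f x\<bar> \<le> B" "L2 L g"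
  shows "L2 L (\<lambda>x. f x * g x)"
  unfolding L2_def
proof
  show fg [measurable]: "(\<lambda>x. f x * g x) \<in> borel_measurable (Iv L)"
    using assms(1) L2_borel_measurable[OF assms(3)] by (rule borel_measurable_times)
  show "integrable (Iv L) (\<lambda>x. (f x * g x)\<^sup>2)"
  proof (rule Bochner_Integration.integrable_bound)
    show "integrable (Iv L) (\<lambda>x. B\<^sup>2 * (g x)\<^sup>2)"
      using assms(3) by (simp add: L2_def)
    show "AE x in Iv L. norm ((f x * g x)\<^sup>2) \<le> norm (B\<^sup>2 * (g x)\<^sup>2)"
      using assms(2)
    proof eventually_elim
      case (elim x)
      then have "(f x)\<^sup>2 \<le> B\<^sup>2"
        by (metis abs_ge_zero order_trans power2_abs power_mono)
      then show ?case
        by (simp add: power_mult_distrib mult_right_mono)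
    qed
  qed measurable
qed

context H10_approximation
begin

lemma weak_solution_energy_identity:
  assumes a: "a \<in> borel_measurable (Iv L)" "AE x in Iv L. \<bar>a x\<bar> \<le> \<beta>"
    and g: "L2 L g"
    and \<phi>: "continuous_on UNIV \<phi>" "\<And>s. \<phi> s \<noteq> -\<infinity>"
    and sol: "weak_solution L a g \<phi> u"
  shows "integral\<^sup>L (Iv L) (\<lambda>x. a x * (u' x)\<^sup>2) = integral\<^sup>L (Iv L) (\<lambda>x. g x * u' x)"
proof -
  have finite: "AE x in Iv L. \<phi> (u x) \<noteq> \<infinity>" and L2_\<phi>: "L2 L (\<lambda>x. real_of_ereal (\<phi> (u x)))"
    and eqn: "\<And>n. integral\<^sup>L (Iv L) (\<lambda>x. a x * u' x * deriv (\<psi>s n) x)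
        = integral\<^sup>L (Iv L) (\<lambda>x. real_of_ereal (\<phi> (u x)) * deriv (\<psi>s n) x)
          + integral\<^sup>L (Iv L) (\<lambda>x. g x * deriv (\<psi>s n) x)"
    using sol L2_u' weak_deriv test unfolding weak_solution_def by blast+
  have "(\<lambda>n. integral\<^sup>L (Iv L) (\<lambda>x. a x * u' x * deriv (\<psi>s n) x))
      \<longlonglongrightarrow> integral\<^sup>L (Iv L) (\<lambda>x. a x * u' x * u' x)"
    by (intro integral_mult_deriv_tendsto L2_mult_bounded[OF a L2_u'])
  moreover have "(\<lambda>n. integral\<^sup>L (Iv L) (\<lambda>x. a x * u' x * deriv (\<psi>s n) x))
      \<longlonglongrightarrow> integral\<^sup>L (Iv L) (\<lambda>x. real_of_ereal (\<phi> (u x)) * u' x)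
        + integral\<^sup>L (Iv L) (\<lambda>x. g x * u' x)"
    unfolding eqn by (intro tendsto_add integral_mult_deriv_tendsto L2_\<phi> g)
  ultimately show ?thesis
    using LIMSEQ_unique integral_ereal_comp_mult_eq_0[OF \<phi> finite L2_\<phi>]
    by (fastforce simp: power2_eq_square mult.assoc)
qed

lemma AE_abs_le_L2norm: "AE x in Iv L. \<bar>u x\<bar> \<le> sqrt L * L2norm L u'"
  using AE_eq_antideriv by eventually_elim (simp add: abs_antideriv_le)

end

lemma L2norm_le_if_energy_identity:
  assumes "0 < \<alpha>" "AE x in Iv L. \<alpha> \<le> a x" "L2 L v" "L2 L g"
    and int: "integrable (Iv L) (\<lambda>x. a x * (v x)\<^sup>2)"
    and energy: "integral\<^sup>L (Iv L) (\<lambda>x. a x * (v x)\<^sup>2) = integral\<^sup>L (Iv L) (\<lambda>x. g x * v x)"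
  shows "L2norm L v \<le> (1 / \<alpha>) * L2norm L g"
proof -
  have "\<alpha> * (L2norm L v)\<^sup>2 = integral\<^sup>L (Iv L) (\<lambda>x. \<alpha> * (v x)\<^sup>2)"
    by (simp add: L2norm_def)
  also have "\<dots> \<le> integral\<^sup>L (Iv L) (\<lambda>x. a x * (v x)\<^sup>2)"
  proof (rule integral_mono_AE)
    show "AE x in Iv L. \<alpha> * (v x)\<^sup>2 \<le> a x * (v x)\<^sup>2"
      using assms(2) by eventually_elim (simp add: mult_right_mono)
  qed (use assms(3) int in \<open>simp_all add: L2_def\<close>)
  also have "\<dots> \<le> L2norm L g * L2norm L v"
    using energy abs_integral_mult_le_L2norm[OF assms(4,3)] by linarith
  finally have "\<alpha> * (L2norm L v)\<^sup>2 \<le> L2norm L g * L2norm L v" .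
  then show ?thesis
    using assms(1) L2norm_nonneg[of L v] L2norm_nonneg[of L g]
    by (cases "L2norm L v = 0") (auto simp: power2_eq_square field_simps)
qed

theorem mainTheorem17:
  fixes L \<alpha> \<beta> :: real and a g u v :: "real \<Rightarrow> real" and \<phi> :: "real \<Rightarrow> ereal"
  assumes "L > 0"
    and "a \<in> borel_measurable (Iv L)" and "0 < \<alpha>" and "\<alpha> < \<beta>"
    and "AE x in Iv L. \<alpha> \<le> a x \<and> a x \<le> \<beta>"
    and "L2 L g"
    and "continuous_on UNIV \<phi>" and "\<forall>s. \<phi> s \<noteq> -\<infinity>" and "\<forall>s. s \<noteq> 0 \<longrightarrow> \<phi> s \<noteq> \<infinity>"
    and "weak_solution L a g \<phi> u"
    and "L2 L v" and "weak_deriv L u v"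
  shows "integral\<^sup>L (Iv L) (\<lambda>x. a x * (v x)\<^sup>2) = integral\<^sup>L (Iv L) (\<lambda>x. g x * v x) \<and>
      L2norm L v \<le> (1 / \<alpha>) * L2norm L g \<and>
      (AE x in Iv L. \<bar>u x\<bar> \<le> sqrt L / \<alpha> * L2norm L g)"
proof -
  obtain \<psi>s where "H10_approximation L u v \<psi>s"
    using H10_approximationE assms(1,10,11,12) unfolding weak_solution_def by blast
  then interpret H10_approximation L u v \<psi>s .
  have a_bounded: "AE x in Iv L. \<bar>a x\<bar> \<le> \<beta>"
    using assms(5) by eventually_elim (use assms(3) in auto)
  have energy: "integral\<^sup>L (Iv L) (\<lambda>x. a x * (v x)\<^sup>2) = integral\<^sup>L (Iv L) (\<lambda>x. g x * v x)"
    using assms(2,6,7,8,10) a_bounded by (intro weak_solution_energy_identity) auto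
  have "integrable (Iv L) (\<lambda>x. a x * (v x)\<^sup>2)"
    using L2_integrable_mult[OF L2_mult_bounded[OF assms(2) a_bounded assms(11)] assms(11)]
    by (simp add: power2_eq_square mult.assoc)
  then have v_bound: "L2norm L v \<le> (1 / \<alpha>) * L2norm L g"
    using assms(3,5,6,11) energy
    by (intro L2norm_le_if_energy_identity[where a = a]) (auto elim!: AE_mp)
  have "AE x in Iv L. \<bar>u x\<bar> \<le> sqrt L / \<alpha> * L2norm L g"
    using AE_abs_le_L2norm
  proof eventually_elim
    case (elim x)
    also have "sqrt L * L2norm L v \<le> sqrt L * ((1 / \<alpha>) * L2norm L g)"
      using v_bound assms(1) by (intro mult_left_mono) auto
    finally show ?case
      by simp
  qed
  with energy v_bound show ?thesis
    by blast
qed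

end
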